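(* Let $f,g\in C[0,1]$ satisfy $f(x)\neq0$ and $g(x)\neq0$ for all $x\in[0,1]$, and suppose $\overline{\dim}_B G(f)\neq\overline{\dim}_B G(g)$. Then $$\overline{\dim}_B G(f\cdot g)=\max\{\overline{\dim}_B G(f),\ \overline{\dim}_B G(g)\}.$$
   Context: $C[0,1]$ is the space of real-valued continuous functions on $[0,1]$; $G(f)=\{(x,f(x)):x\in[0,1]\}\subset\mathbb{R}^2$ is the graph of $f$; $f\cdot g$ is the pointwise product. For a nonempty bounded set $F$, $N_\delta(F)$ is the smallest number of sets of diameter at most $\delta$ covering $F$, and $\overline{\dim}_B F=\limsup_{\delta\to0}\frac{\log N_\delta(F)}{-\log\delta}$. *)

theory Defs
  imports "HOL-Analysis.Analysis" "HOL-Library.Liminf_Limsup"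
begin

text \<open>Graph of f over [0,1], as a subset of the Euclidean plane (real \<times> real carries the Euclidean metric).\<close>
definition graph01 :: "(real \<Rightarrow> real) \<Rightarrow> (real \<times> real) set" where
  "graph01 f = {(x, f x) | x. x \<in> {0..1}}"

definition covering_number :: "'a::metric_space set \<Rightarrow> real \<Rightarrow> nat" where
  "covering_number F \<delta> = (LEAST n. \<exists>C. finite C \<and> card C = n \<and>
      (\<forall>S\<in>C. bounded S \<and> diameter S \<le> \<delta>) \<and> F \<subseteq> \<Union>C)"

definition upper_box_dim :: "'a::metric_space set \<Rightarrow> ereal" where
  "upper_box_dim F = Limsup (at_right 0)
      (\<lambda>\<delta>. ereal (ln (real (covering_number F \<delta>)) / - ln \<delta>))"

end

theory Submission
  imports Defs "HOL-Real_Asymp.Real_Asymp"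
begin

text \<open>Cut \<open>[0,1]\<close> into columns of width \<open>d\<close>. Up to constant factors, the number of sets of
  diameter \<open>d\<close> needed to cover the graph of a continuous \<open>h\<close> is the sum over the columns of
  \<open>osc h / d + 1\<close>, where \<open>osc h\<close> is the oscillation of \<open>h\<close> on the column (Falconer's count of
  mesh squares). If \<open>\<bar>h x - h y\<bar> \<le> A \<bar>f x - f y\<bar> + B \<bar>g x - g y\<bar>\<close>, the oscillations of \<open>h\<close> are
  dominated by those of \<open>f\<close> and \<open>g\<close>, so the upper box dimension of the graph of \<open>h\<close> is at most
  the larger of those of \<open>f\<close> and \<open>g\<close>. This applies to the product \<open>f g\<close> of bounded functions and
  to \<open>1 / g\<close> when \<open>\<bar>g\<bar>\<close> is bounded below, hence also to \<open>f = (f g) (1 / g)\<close> and \<open>g = (f g) (1 / f)\<close>.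
  If, say, \<open>dim f < dim g\<close>, then \<open>dim g \<le> max (dim (f g)) (dim f)\<close> forces \<open>dim g \<le> dim (f g)\<close>,
  and \<open>dim (f g) \<le> max (dim f) (dim g)\<close> gives the reverse inequality.\<close>

section \<open>Covering numbers and upper box dimension\<close>

lemma covering_number_le_card:
  assumes "finite C" "\<forall>S\<in>C. bounded S \<and> diameter S \<le> e" "F \<subseteq> \<Union>C"
  shows "covering_number F e \<le> card C"
  unfolding covering_number_def by (rule Least_le) (use assms in blast)

text \<open>The cover \<open>C\<close> is only there to make the \<open>LEAST\<close> in \<open>covering_number\<close> range over a nonempty set.\<close>
lemma card_le_covering_number:
  fixes F :: "'a::metric_space set" and \<phi> :: "'b \<Rightarrow> 'a"
  assumes cover: "finite C" "\<forall>S\<in>C. bounded S \<and> diameter S \<le> e" "F \<subseteq> \<Union>C"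
    and "finite I" "\<phi> ` I \<subseteq> F"
    and separated: "\<And>a b. a \<in> I \<Longrightarrow> b \<in> I \<Longrightarrow> a \<noteq> b \<Longrightarrow> e < dist (\<phi> a) (\<phi> b)"
  shows "card I \<le> covering_number F e"
proof -
  let ?covers = "\<lambda>n. \<exists>C. finite C \<and> card C = n \<and> (\<forall>S\<in>C. bounded S \<and> diameter S \<le> e) \<and> F \<subseteq> \<Union>C"
  obtain D where D: "finite D" "card D = covering_number F e"
      "\<forall>S\<in>D. bounded S \<and> diameter S \<le> e" "F \<subseteq> \<Union>D"
    using LeastI_ex[of ?covers] cover unfolding covering_number_def by blast
  have "\<forall>a\<in>I. \<exists>S\<in>D. \<phi> a \<in> S" using \<open>\<phi> ` I \<subseteq> F\<close> D(4) by blast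
  then obtain \<sigma> where \<sigma>: "\<And>a. a \<in> I \<Longrightarrow> \<sigma> a \<in> D \<and> \<phi> a \<in> \<sigma> a" by metis
  have "inj_on \<sigma> I"
  proof (rule inj_onI, rule ccontr)
    fix a b assume ab: "a \<in> I" "b \<in> I" "\<sigma> a = \<sigma> b" "a \<noteq> b"
    then have "bounded (\<sigma> a)" "\<phi> a \<in> \<sigma> a" "\<phi> b \<in> \<sigma> a" using \<sigma> D(3) by auto
    then have "dist (\<phi> a) (\<phi> b) \<le> diameter (\<sigma> a)" by (rule diameter_bounded_bound)
    also have "\<dots> \<le> e" using \<sigma> D(3) ab(1) by blast
    finally show False using separated[OF ab(1,2,4)] by simp
  qed
  moreover have "\<sigma> ` I \<subseteq> D" using \<sigma> by blast
  ultimately have "card I \<le> card D" using D(1) by (rule card_inj_on_le)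
  then show ?thesis using D(2) by simp
qed

lemma eventually_at_right_0_unit_interval: "eventually (\<lambda>\<delta>::real. 0 < \<delta> \<and> \<delta> < 1) (at_right 0)"
  unfolding eventually_at_right_field by (auto intro: exI[of _ 1])

lemma eventually_covering_number_less_powr:
  fixes F :: "'a::metric_space set"
  assumes "upper_box_dim F < ereal r"
  shows "eventually (\<lambda>\<delta>. real (covering_number F \<delta>) < \<delta> powr -r) (at_right 0)"
proof -
  have "eventually (\<lambda>\<delta>. ln (real (covering_number F \<delta>)) / - ln \<delta> < r) (at_right 0)"
    using Limsup_lessD[OF assms[unfolded upper_box_dim_def]] by simp
  moreover note eventually_at_right_0_unit_interval
  ultimately show ?thesis
  proof eventually_elim
    case (elim \<delta>)
    have "0 < - ln \<delta>" using elim(2) by simp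
    with elim(1) have "ln (real (covering_number F \<delta>)) < r * - ln \<delta>"
      by (simp only: pos_divide_less_eq)
    then have "ln (real (covering_number F \<delta>)) < ln (\<delta> powr -r)"
      using elim by (simp add: ln_powr)
    then show ?case
      using elim(2) ln_less_cancel_iff[of "real (covering_number F \<delta>)" "\<delta> powr -r"]
      by (cases "covering_number F \<delta> = 0") (simp_all del: ln_powr)
  qed
qed

text \<open>The positivity hypothesis matters: for the empty set every quotient is \<open>ln 0 / - ln \<delta> = 0\<close>.\<close>
lemma upper_box_dim_le_of_eventually_le_powr:
  fixes F :: "'a::metric_space set"
  assumes pos: "eventually (\<lambda>\<delta>. 1 \<le> covering_number F \<delta>) (at_right 0)"
    and bound: "\<And>s. r < s \<Longrightarrow> eventually (\<lambda>\<delta>. real (covering_number F \<delta>) \<le> \<delta> powr -s) (at_right 0)"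
  shows "upper_box_dim F \<le> ereal r"
proof (rule dense_ge)
  fix y assume "ereal r < y"
  then obtain s where s: "r < s" "ereal s < y" using ereal_dense2 by fastforce
  note eventually_at_right_0_unit_interval
  with pos bound[OF s(1)]
  have "eventually (\<lambda>\<delta>. ereal (ln (real (covering_number F \<delta>)) / - ln \<delta>) \<le> ereal s) (at_right 0)"
  proof eventually_elim
    case (elim \<delta>)
    then have "ln (real (covering_number F \<delta>)) \<le> ln (\<delta> powr -s)"
      by (subst ln_le_cancel_iff) auto
    then have "ln (real (covering_number F \<delta>)) \<le> s * - ln \<delta>"
      using elim by (simp add: ln_powr)
    moreover have "0 < - ln \<delta>" using elim(3) by simp
    ultimately show ?case
      by (simp only: ereal_less_eq(3) pos_divide_le_eq)
  qed
  then have "upper_box_dim F \<le> ereal s"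
    unfolding upper_box_dim_def by (rule Limsup_bounded)
  then show "upper_box_dim F \<le> y" using s(2) by simp
qed

lemma eventually_covering_number_le_powr_of_covering_bound:
  fixes E F1 F2 :: "'a::metric_space set"
  assumes "C > 0" "c > 0"
    and bound: "eventually (\<lambda>\<delta>. real (covering_number E \<delta>)
        \<le> C * max (real (covering_number F1 (c * \<delta>))) (real (covering_number F2 (c * \<delta>)))) (at_right 0)"
    and "upper_box_dim F1 < ereal r" "upper_box_dim F2 < ereal r" "r < s"
  shows "eventually (\<lambda>\<delta>. real (covering_number E \<delta>) \<le> \<delta> powr -s) (at_right 0)"
proof -
  have scale: "filterlim (\<lambda>\<delta>. c * \<delta>) (at_right 0) (at_right 0)"
    using \<open>c > 0\<close> by real_asymp
  have rescaled: "eventually (\<lambda>\<delta>. real (covering_number F (c * \<delta>)) < (c * \<delta>) powr -r) (at_right 0)"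
    if "upper_box_dim F < ereal r" for F :: "'a set"
    using eventually_compose_filterlim[OF eventually_covering_number_less_powr[OF that] scale] .
  have "eventually (\<lambda>\<delta>. C * (c * \<delta>) powr -r \<le> \<delta> powr -s) (at_right 0)"
    using \<open>r < s\<close> \<open>C > 0\<close> \<open>c > 0\<close> by real_asymp
  with bound rescaled[OF assms(4)] rescaled[OF assms(5)] show ?thesis
  proof eventually_elim
    case (elim \<delta>)
    then have "C * max (real (covering_number F1 (c * \<delta>))) (real (covering_number F2 (c * \<delta>)))
        \<le> C * (c * \<delta>) powr -r"
      using \<open>C > 0\<close> by (intro mult_left_mono) auto
    with elim show ?case by linarith
  qed
qed

lemma upper_box_dim_le_max_of_covering_bound:
  fixes E F1 F2 :: "'a::metric_space set"
  assumes "C > 0" "c > 0"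
    and bound: "eventually (\<lambda>\<delta>. real (covering_number E \<delta>)
        \<le> C * max (real (covering_number F1 (c * \<delta>))) (real (covering_number F2 (c * \<delta>)))) (at_right 0)"
    and pos: "eventually (\<lambda>\<delta>. 1 \<le> covering_number E \<delta>) (at_right 0)"
  shows "upper_box_dim E \<le> max (upper_box_dim F1) (upper_box_dim F2)"
proof (rule dense_ge)
  fix y assume "max (upper_box_dim F1) (upper_box_dim F2) < y"
  then obtain r where r: "max (upper_box_dim F1) (upper_box_dim F2) < ereal r" "ereal r < y"
    using ereal_dense2 by blast
  have "upper_box_dim E \<le> ereal r"
    using r(1) by (intro upper_box_dim_le_of_eventually_le_powr[OF pos]
        eventually_covering_number_le_powr_of_covering_bound[OF assms(1-3)]) auto
  then show "upper_box_dim E \<le> y" using r(2) by simp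
qed

section \<open>Columns and their oscillations\<close>

definition grid_size :: "real \<Rightarrow> nat" where
  "grid_size d = nat \<lceil>1 / d\<rceil>"

definition grid_column :: "real \<Rightarrow> nat \<Rightarrow> real set" where
  "grid_column d j = {real j * d .. min (real (Suc j) * d) 1}"

definition osc :: "(real \<Rightarrow> real) \<Rightarrow> real set \<Rightarrow> real" where
  "osc h S = Sup (h ` S) - Inf (h ` S)"

definition osc_sum :: "(real \<Rightarrow> real) \<Rightarrow> real \<Rightarrow> real" where
  "osc_sum h d = (\<Sum>j<grid_size d. osc h (grid_column d j) / d + 1)"

definition column_steps :: "(real \<Rightarrow> real) \<Rightarrow> real \<Rightarrow> nat \<Rightarrow> nat" where
  "column_steps h d j = nat \<lfloor>osc h (grid_column d j) / d\<rfloor>"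

definition column_box :: "(real \<Rightarrow> real) \<Rightarrow> real \<Rightarrow> nat \<Rightarrow> nat \<Rightarrow> (real \<times> real) set" where
  "column_box h d j k = grid_column d j \<times>
     {Inf (h ` grid_column d j) + real k * d .. Inf (h ` grid_column d j) + real (Suc k) * d}"

definition column_boxes :: "(real \<Rightarrow> real) \<Rightarrow> real \<Rightarrow> (real \<times> real) set set" where
  "column_boxes h d = (\<lambda>(j, k). column_box h d j k) ` Sigma {..<grid_size d} (\<lambda>j. {..column_steps h d j})"

lemma grid_column_subset_unit_interval:
  assumes "d > 0" "j < grid_size d"
  shows "real j * d \<le> min (real (Suc j) * d) 1" "grid_column d j \<subseteq> {0..1}"
proof -
  have "real j < 1 / d" using assms unfolding grid_size_def by linarith
  then have "real j * d < 1" using assms by (simp add: field_simps)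
  then show "real j * d \<le> min (real (Suc j) * d) 1" using assms by (simp add: algebra_simps)
  then show "grid_column d j \<subseteq> {0..1}" using assms by (auto simp: grid_column_def)
qed

lemma grid_columns_cover_unit_interval:
  assumes "d > 0" "x \<in> {0..1}"
  shows "\<exists>j<grid_size d. x \<in> grid_column d j"
proof -
  define j where "j = min (nat \<lfloor>x / d\<rfloor>) (grid_size d - 1)"
  have "0 < \<lceil>1 / d\<rceil>" using assms by simp
  then have "1 \<le> grid_size d" unfolding grid_size_def by linarith
  then have j_lt: "j < grid_size d" unfolding j_def by linarith
  have "0 \<le> x / d" using assms by simp
  then have floor_x: "real (nat \<lfloor>x / d\<rfloor>) \<le> x / d" "x / d < real (nat \<lfloor>x / d\<rfloor>) + 1"
    by linarith+
  have "real j * d \<le> x"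
  proof -
    have "real j \<le> x / d" using floor_x unfolding j_def by linarith
    then show ?thesis using assms by (simp add: field_simps)
  qed
  moreover have "x \<le> real (Suc j) * d"
  proof (cases "nat \<lfloor>x / d\<rfloor> \<le> grid_size d - 1")
    case True
    then have "x / d \<le> real (Suc j)" using floor_x unfolding j_def by linarith
    then show ?thesis using assms by (simp add: field_simps)
  next
    case False
    then have "1 / d \<le> real (Suc j)" unfolding j_def grid_size_def by linarith
    then show ?thesis using assms by (simp add: field_simps)
  qed
  ultimately show ?thesis using j_lt assms by (auto simp: grid_column_def)
qed

lemma grid_column_width:
  assumes "x \<in> grid_column d j" "x' \<in> grid_column d j"
  shows "\<bar>x - x'\<bar> \<le> d"
  using assms by (auto simp: grid_column_def algebra_simps abs_le_iff)

lemma grid_column_gap: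
  assumes "d > 0" "j + 2 \<le> j'" "x \<in> grid_column d j" "x' \<in> grid_column d j'"
  shows "d \<le> x' - x"
proof -
  have "real (Suc j) * d + d \<le> real j' * d"
    using assms(1,2) mult_right_mono[of "real (Suc j) + 1" "real j'" d] by (simp add: algebra_simps)
  then show ?thesis using assms(3,4) by (auto simp: grid_column_def)
qed

lemma image_grid_column:
  assumes "continuous_on {0..1} h" "d > 0" "j < grid_size d"
  shows "h ` grid_column d j = {Inf (h ` grid_column d j) .. Inf (h ` grid_column d j) + osc h (grid_column d j)}"
    and "0 \<le> osc h (grid_column d j)"
proof -
  note col = grid_column_subset_unit_interval[OF assms(2,3)]
  have "continuous_on (grid_column d j) h" using assms(1) col(2) by (rule continuous_on_subset)
  then obtain a b where "h ` grid_column d j = {a..b}" "a \<le> b"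
    using continuous_image_closed_interval[OF col(1)] unfolding grid_column_def by blast
  then show "h ` grid_column d j = {Inf (h ` grid_column d j) .. Inf (h ` grid_column d j) + osc h (grid_column d j)}"
    and "0 \<le> osc h (grid_column d j)" by (auto simp: osc_def)
qed

lemma abs_diff_le_osc_grid_column:
  assumes "continuous_on {0..1} h" "d > 0" "j < grid_size d"
    and "x \<in> grid_column d j" "y \<in> grid_column d j"
  shows "\<bar>h x - h y\<bar> \<le> osc h (grid_column d j)"
proof -
  have "h ` grid_column d j \<subseteq> {Inf (h ` grid_column d j) .. Inf (h ` grid_column d j) + osc h (grid_column d j)}"
    using image_grid_column(1)[OF assms(1-3)] by (rule equalityD1)
  then have "h x \<in> {Inf (h ` grid_column d j) .. Inf (h ` grid_column d j) + osc h (grid_column d j)}"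
    "h y \<in> {Inf (h ` grid_column d j) .. Inf (h ` grid_column d j) + osc h (grid_column d j)}"
    using assms(4,5) by auto
  then show ?thesis by (simp add: abs_le_iff)
qed

lemma column_steps_bounds:
  assumes "continuous_on {0..1} h" "d > 0" "j < grid_size d"
  shows "real (column_steps h d j) \<le> osc h (grid_column d j) / d"
    and "osc h (grid_column d j) / d < real (column_steps h d j) + 1"
proof -
  have "0 \<le> osc h (grid_column d j) / d" using image_grid_column(2)[OF assms] assms(2) by simp
  then show "real (column_steps h d j) \<le> osc h (grid_column d j) / d"
    and "osc h (grid_column d j) / d < real (column_steps h d j) + 1"
    unfolding column_steps_def by linarith+
qed

lemma grid_column_level_attained:
  assumes h: "continuous_on {0..1} h" and d: "d > 0" and j: "j < grid_size d"
    and "i \<le> column_steps h d j"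
  shows "\<exists>x\<in>grid_column d j. h x = Inf (h ` grid_column d j) + real i * d"
proof -
  have "real i \<le> osc h (grid_column d j) / d"
    using column_steps_bounds(1)[OF h d j] assms(4) by linarith
  then have "real i * d \<le> osc h (grid_column d j)" using d by (simp add: le_divide_eq)
  then have "Inf (h ` grid_column d j) + real i * d
      \<in> {Inf (h ` grid_column d j) .. Inf (h ` grid_column d j) + osc h (grid_column d j)}"
    using d by simp
  then have "Inf (h ` grid_column d j) + real i * d \<in> h ` grid_column d j"
    by (simp only: image_grid_column(1)[OF h d j, symmetric])
  then show ?thesis by auto
qed

section \<open>Box counting for graphs\<close>

lemma column_box_diameter:
  assumes "d > 0"
  shows "bounded (column_box h d j k) \<and> diameter (column_box h d j k) \<le> 2 * d"
proof
  show "bounded (column_box h d j k)" unfolding column_box_def grid_column_def by (intro bounded_Times) auto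
  show "diameter (column_box h d j k) \<le> 2 * d"
  proof (rule diameter_le)
    fix p q assume "p \<in> column_box h d j k" "q \<in> column_box h d j k"
    then have "fst p \<in> grid_column d j" "fst q \<in> grid_column d j" "\<bar>snd p - snd q\<bar> \<le> d"
      by (auto simp: column_box_def mem_Times_iff abs_le_iff algebra_simps)
    then have "\<bar>fst p - fst q\<bar> \<le> d" "\<bar>snd p - snd q\<bar> \<le> d" using grid_column_width[of "fst p" d j "fst q"] by simp_all
    moreover have "norm (p - q) \<le> norm (fst p - fst q) + norm (snd p - snd q)"
      using norm_Pair_le[of "fst p - fst q" "snd p - snd q"] by (cases p, cases q) simp
    ultimately show "norm (p - q) \<le> 2 * d" by simp
  qed (use assms in simp)
qed

lemma graph01_subset_column_boxes:
  assumes h: "continuous_on {0..1} h" and d: "d > 0"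
  shows "graph01 h \<subseteq> \<Union>(column_boxes h d)"
proof
  fix p assume "p \<in> graph01 h"
  then obtain x where x: "x \<in> {0..1}" "p = (x, h x)" unfolding graph01_def by auto
  obtain j where j: "j < grid_size d" "x \<in> grid_column d j" using grid_columns_cover_unit_interval[OF d x(1)] by auto
  let ?lo = "Inf (h ` grid_column d j)"
  have hx: "?lo \<le> h x" "h x \<le> ?lo + osc h (grid_column d j)"
    using image_grid_column(1)[OF h d j(1)] j(2) by auto
  define k where "k = nat \<lfloor>(h x - ?lo) / d\<rfloor>"
  have "0 \<le> (h x - ?lo) / d" using hx d by simp
  then have "real k \<le> (h x - ?lo) / d" "(h x - ?lo) / d < real k + 1"
    unfolding k_def by linarith+
  then have "h x \<in> {?lo + real k * d .. ?lo + real (Suc k) * d}"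
    using d by (simp add: field_simps)
  moreover have "k \<le> column_steps h d j"
    using hx d unfolding k_def column_steps_def by (intro nat_mono floor_mono divide_right_mono) auto
  ultimately show "p \<in> \<Union>(column_boxes h d)"
    using x j unfolding column_boxes_def column_box_def by force
qed

lemma card_column_boxes_le_osc_sum:
  assumes "continuous_on {0..1} h" "d > 0"
  shows "real (card (column_boxes h d)) \<le> osc_sum h d"
proof -
  have "card (column_boxes h d) \<le> (\<Sum>j<grid_size d. column_steps h d j + 1)"
    unfolding column_boxes_def by (rule order_trans[OF card_image_le]) auto
  then have "real (card (column_boxes h d)) \<le> (\<Sum>j<grid_size d. real (column_steps h d j) + 1)"
    by (simp add: of_nat_mono[THEN order_trans] add.commute)
  also have "\<dots> \<le> osc_sum h d"
    unfolding osc_sum_def using column_steps_bounds(1)[OF assms] by (intro sum_mono) auto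
  finally show ?thesis .
qed

lemma graph01_finite_cover:
  assumes "continuous_on {0..1} h" "e > 0"
  shows "\<exists>C. finite C \<and> (\<forall>S\<in>C. bounded S \<and> diameter S \<le> e) \<and> graph01 h \<subseteq> \<Union>C"
proof -
  have "\<forall>S\<in>column_boxes h (e / 2). bounded S \<and> diameter S \<le> e"
    using column_box_diameter[of "e / 2" h] assms(2) by (auto simp: column_boxes_def)
  moreover have "finite (column_boxes h (e / 2))" by (simp add: column_boxes_def)
  moreover have "graph01 h \<subseteq> \<Union>(column_boxes h (e / 2))"
    using assms by (intro graph01_subset_column_boxes) auto
  ultimately show ?thesis by blast
qed

lemma covering_number_graph01_le_osc_sum:
  assumes "continuous_on {0..1} h" "d > 0"
  shows "real (covering_number (graph01 h) (2 * d)) \<le> osc_sum h d"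
proof -
  have "covering_number (graph01 h) (2 * d) \<le> card (column_boxes h d)"
    using column_box_diameter[of d h] graph01_subset_column_boxes[OF assms] assms(2)
    by (intro covering_number_le_card) (auto simp: column_boxes_def)
  then show ?thesis using card_column_boxes_le_osc_sum[OF assms] by linarith
qed

lemma grid_columns_dist_ge:
  assumes "d > 0" "x \<in> grid_column d j" "x' \<in> grid_column d j'"
    and "j + 2 \<le> j' \<or> j' + 2 \<le> j \<or> d \<le> \<bar>y - y'\<bar>"
  shows "d \<le> dist (x, y) (x', y')"
proof -
  have "d \<le> \<bar>x - x'\<bar> \<or> d \<le> \<bar>y - y'\<bar>"
    using assms grid_column_gap[OF assms(1)] by fastforce
  then show ?thesis
    using dist_fst_le[of "(x, y)" "(x', y')"] dist_snd_le[of "(x, y)" "(x', y')"]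
    by (auto simp: dist_real_def)
qed

text \<open>The graph meets every level \<open>Inf + i d\<close> of a column; across pairwise non-adjacent
  columns these points are \<open>d\<close>-separated, so each needs its own set of diameter \<open>d / 2\<close>.\<close>
lemma sum_column_steps_le_covering_number:
  assumes h: "continuous_on {0..1} h" and d: "d > 0" and J: "J \<subseteq> {..<grid_size d}"
    and apart: "\<And>j j'. j \<in> J \<Longrightarrow> j' \<in> J \<Longrightarrow> j < j' \<Longrightarrow> j + 2 \<le> j'"
  shows "(\<Sum>j\<in>J. column_steps h d j + 1) \<le> covering_number (graph01 h) (d / 2)"
proof -
  define level where "level j i = Inf (h ` grid_column d j) + real i * d" for j i
  have "\<exists>x\<in>grid_column d j. h x = level j i" if "j \<in> J" "i \<le> column_steps h d j" for j i
    using grid_column_level_attained[OF h d] that J unfolding level_def by blast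
  then obtain x where x: "\<And>j i. j \<in> J \<Longrightarrow> i \<le> column_steps h d j \<Longrightarrow>
      x j i \<in> grid_column d j \<and> h (x j i) = level j i"
    by metis
  define I where "I = Sigma J (\<lambda>j. {..column_steps h d j})"
  define \<phi> where "\<phi> = (\<lambda>(j, i). (x j i, level j i))"
  obtain C where C: "finite C" "\<forall>S\<in>C. bounded S \<and> diameter S \<le> d / 2" "graph01 h \<subseteq> \<Union>C"
    using graph01_finite_cover[OF h, of "d / 2"] d by auto
  have "finite I" unfolding I_def using J finite_subset by blast
  moreover have "\<phi> ` I \<subseteq> graph01 h"
  proof (rule image_subsetI)
    fix p assume "p \<in> I"
    then obtain j i where p: "p = (j, i)" "j \<in> J" "i \<le> column_steps h d j" unfolding I_def by auto
    then have "x j i \<in> {0..1}" using x grid_column_subset_unit_interval(2)[OF d] J by blast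
    then show "\<phi> p \<in> graph01 h" using x p unfolding \<phi>_def graph01_def by auto
  qed
  moreover have "d / 2 < dist (\<phi> a) (\<phi> b)" if "a \<in> I" "b \<in> I" "a \<noteq> b" for a b
  proof -
    obtain j i j' i' where ab: "a = (j, i)" "b = (j', i')" by (cases a, cases b)
    have jJ: "j \<in> J" "i \<le> column_steps h d j" "j' \<in> J" "i' \<le> column_steps h d j'"
      using that ab unfolding I_def by auto
    have "j + 2 \<le> j' \<or> j' + 2 \<le> j \<or> d \<le> \<bar>level j i - level j' i'\<bar>"
    proof (cases "j = j'")
      case True
      then have "1 \<le> \<bar>real i - real i'\<bar>" using that ab by auto
      then show ?thesis
        using True d mult_right_mono[of 1 "\<bar>real i - real i'\<bar>" d]
        by (simp add: level_def abs_mult flip: left_diff_distrib)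
    next
      case False
      then show ?thesis using apart jJ by (cases "j < j'") auto
    qed
    moreover have "x j i \<in> grid_column d j" "x j' i' \<in> grid_column d j'" using x jJ by auto
    ultimately have "d \<le> dist (x j i, level j i) (x j' i', level j' i')"
      by (intro grid_columns_dist_ge[OF d])
    then have "d \<le> dist (\<phi> a) (\<phi> b)" using ab by (simp add: \<phi>_def)
    then show ?thesis using d by simp
  qed
  ultimately have "card I \<le> covering_number (graph01 h) (d / 2)"
    by (rule card_le_covering_number[OF C])
  moreover have "finite J" using J finite_subset by blast
  ultimately show ?thesis unfolding I_def by simp
qed

lemma osc_sum_le_covering_number_graph01:
  assumes h: "continuous_on {0..1} h" and d: "d > 0"
  shows "osc_sum h d \<le> 4 * real (covering_number (graph01 h) (d / 2))"
proof -
  define parity where "parity r = {j. j < grid_size d \<and> j mod 2 = r}" for r :: nat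
  have parity_bound: "(\<Sum>j\<in>parity r. column_steps h d j + 1) \<le> covering_number (graph01 h) (d / 2)" for r
    by (rule sum_column_steps_le_covering_number[OF h d]) (auto simp: parity_def, presburger)
  have split: "{..<grid_size d} = parity 0 \<union> parity 1" by (auto simp: parity_def)
  have "(\<Sum>j<grid_size d. column_steps h d j + 1)
      = (\<Sum>j\<in>parity 0. column_steps h d j + 1) + (\<Sum>j\<in>parity 1. column_steps h d j + 1)"
    unfolding split by (rule sum.union_disjoint) (auto simp: parity_def)
  then have "real (\<Sum>j<grid_size d. column_steps h d j + 1) \<le> 2 * real (covering_number (graph01 h) (d / 2))"
    using parity_bound[of 0] parity_bound[of 1] by linarith
  moreover have "osc_sum h d \<le> 2 * real (\<Sum>j<grid_size d. column_steps h d j + 1)"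
    unfolding osc_sum_def using column_steps_bounds(2)[OF h d]
    by (simp add: sum_distrib_left, intro sum_mono) fastforce
  ultimately show ?thesis by linarith
qed

lemma covering_number_graph01_pos:
  assumes h: "continuous_on {0..1} h" and e: "e > 0"
  shows "1 \<le> covering_number (graph01 h) e"
proof -
  have "0 < \<lceil>1 / (2 * e)\<rceil>" using e by simp
  then have "{0} \<subseteq> {..<grid_size (2 * e)}" unfolding grid_size_def by simp
  then have "(\<Sum>j\<in>{0}. column_steps h (2 * e) j + 1) \<le> covering_number (graph01 h) (2 * e / 2)"
    using e by (intro sum_column_steps_le_covering_number[OF h]) auto
  then show ?thesis by simp
qed

section \<open>Graphs of dominated functions\<close>

lemma osc_grid_column_le_of_dominated:
  assumes f: "continuous_on {0..1} f" and g: "continuous_on {0..1} g" and h: "continuous_on {0..1} h"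
    and AB: "A \<ge> 0" "B \<ge> 0"
    and dom: "\<And>x y. x \<in> {0..1} \<Longrightarrow> y \<in> {0..1} \<Longrightarrow> \<bar>h x - h y\<bar> \<le> A * \<bar>f x - f y\<bar> + B * \<bar>g x - g y\<bar>"
    and d: "d > 0" and j: "j < grid_size d"
  shows "osc h (grid_column d j) \<le> A * osc f (grid_column d j) + B * osc g (grid_column d j)"
proof -
  let ?S = "grid_column d j"
  have "{Inf (h ` ?S) .. Inf (h ` ?S) + osc h ?S} \<subseteq> h ` ?S"
    using image_grid_column(1)[OF h d j] by (rule equalityD2)
  then have "Inf (h ` ?S) + osc h ?S \<in> h ` ?S" "Inf (h ` ?S) \<in> h ` ?S"
    using image_grid_column(2)[OF h d j] by auto
  then obtain x y where xy: "x \<in> ?S" "y \<in> ?S" "osc h ?S = h x - h y" by (metis add_diff_cancel_left' imageE)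
  have "x \<in> {0..1}" "y \<in> {0..1}" using xy grid_column_subset_unit_interval(2)[OF d j] by auto
  then have "osc h ?S \<le> A * \<bar>f x - f y\<bar> + B * \<bar>g x - g y\<bar>" using dom xy(3) by fastforce
  also have "\<dots> \<le> A * osc f ?S + B * osc g ?S"
    using abs_diff_le_osc_grid_column[OF f d j xy(1,2)] abs_diff_le_osc_grid_column[OF g d j xy(1,2)] AB
    by (intro add_mono mult_left_mono)
  finally show ?thesis .
qed

lemma osc_sum_le_of_dominated:
  assumes f: "continuous_on {0..1} f" and g: "continuous_on {0..1} g" and h: "continuous_on {0..1} h"
    and AB: "A \<ge> 0" "B \<ge> 0"
    and dom: "\<And>x y. x \<in> {0..1} \<Longrightarrow> y \<in> {0..1} \<Longrightarrow> \<bar>h x - h y\<bar> \<le> A * \<bar>f x - f y\<bar> + B * \<bar>g x - g y\<bar>"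
    and d: "d > 0"
  shows "osc_sum h d \<le> (1 + A + B) * (osc_sum f d + osc_sum g d)"
proof -
  have "osc h (grid_column d j) / d + 1
      \<le> (1 + A + B) * ((osc f (grid_column d j) / d + 1) + (osc g (grid_column d j) / d + 1))"
    if j: "j < grid_size d" for j
  proof -
    define u where "u = osc f (grid_column d j) / d"
    define v where "v = osc g (grid_column d j) / d"
    have "u \<ge> 0" "v \<ge> 0" using image_grid_column(2)[OF f d j] image_grid_column(2)[OF g d j] d
      unfolding u_def v_def by auto
    have "osc h (grid_column d j) / d \<le> A * u + B * v"
      using osc_grid_column_le_of_dominated[OF f g h AB dom d j] d
      unfolding u_def v_def by (simp add: divide_right_mono add_divide_distrib[symmetric])
    also have "A * u + B * v \<le> (1 + A + B) * ((u + 1) + (v + 1)) - 1"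
      using \<open>u \<ge> 0\<close> \<open>v \<ge> 0\<close> AB by (simp add: algebra_simps add_nonneg_nonneg mult_nonneg_nonneg)
    finally show ?thesis unfolding u_def v_def by simp
  qed
  then have "osc_sum h d \<le> (\<Sum>j<grid_size d. (1 + A + B) *
      ((osc f (grid_column d j) / d + 1) + (osc g (grid_column d j) / d + 1)))"
    unfolding osc_sum_def by (intro sum_mono) auto
  also have "\<dots> = (1 + A + B) * (osc_sum f d + osc_sum g d)"
    unfolding osc_sum_def sum.distrib[symmetric] by (rule sum_distrib_left[symmetric])
  finally show ?thesis .
qed

lemma upper_box_dim_graph01_le_of_dominated:
  assumes f: "continuous_on {0..1} f" and g: "continuous_on {0..1} g" and h: "continuous_on {0..1} h"
    and AB: "A \<ge> 0" "B \<ge> 0"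
    and dom: "\<And>x y. x \<in> {0..1} \<Longrightarrow> y \<in> {0..1} \<Longrightarrow> \<bar>h x - h y\<bar> \<le> A * \<bar>f x - f y\<bar> + B * \<bar>g x - g y\<bar>"
  shows "upper_box_dim (graph01 h) \<le> max (upper_box_dim (graph01 f)) (upper_box_dim (graph01 g))"
proof (rule upper_box_dim_le_max_of_covering_bound[where C = "8 * (1 + A + B)" and c = "1 / 4"])
  show "eventually (\<lambda>\<delta>. 1 \<le> covering_number (graph01 h) \<delta>) (at_right 0)"
    using eventually_at_right_less by (rule eventually_mono) (rule covering_number_graph01_pos[OF h])
  show "eventually (\<lambda>\<delta>. real (covering_number (graph01 h) \<delta>) \<le> 8 * (1 + A + B) *
      max (real (covering_number (graph01 f) (1 / 4 * \<delta>))) (real (covering_number (graph01 g) (1 / 4 * \<delta>))))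
      (at_right 0)"
    using eventually_at_right_less
  proof (rule eventually_mono)
    fix \<delta> :: real assume "0 < \<delta>"
    define e where "e = \<delta> / 2"
    have e: "e > 0" "\<delta> = 2 * e" "e / 2 = 1 / 4 * \<delta>" using \<open>0 < \<delta>\<close> unfolding e_def by auto
    let ?Nf = "real (covering_number (graph01 f) (1 / 4 * \<delta>))"
    let ?Ng = "real (covering_number (graph01 g) (1 / 4 * \<delta>))"
    have "real (covering_number (graph01 h) \<delta>) \<le> osc_sum h e"
      using covering_number_graph01_le_osc_sum[OF h e(1)] e(2) by simp
    also have "\<dots> \<le> (1 + A + B) * (osc_sum f e + osc_sum g e)"
      by (rule osc_sum_le_of_dominated[OF f g h AB dom e(1)])
    also have "\<dots> \<le> (1 + A + B) * (4 * ?Nf + 4 * ?Ng)"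
      using osc_sum_le_covering_number_graph01[OF f e(1)] osc_sum_le_covering_number_graph01[OF g e(1)] AB
      unfolding e(3) by (intro mult_left_mono add_mono) auto
    also have "\<dots> \<le> (1 + A + B) * (8 * max ?Nf ?Ng)"
      using AB by (intro mult_left_mono) auto
    also have "\<dots> = 8 * (1 + A + B) * max ?Nf ?Ng" by simp
    finally show "real (covering_number (graph01 h) \<delta>) \<le> 8 * (1 + A + B) * max ?Nf ?Ng" .
  qed
qed (use AB in auto)

lemma graph01_cong:
  assumes "\<And>x. x \<in> {0..1} \<Longrightarrow> f x = g x"
  shows "graph01 f = graph01 g"
  using assms unfolding graph01_def by force

lemma upper_box_dim_graph01_mult_le:
  assumes f: "continuous_on {0..1} f" and g: "continuous_on {0..1} g"
  shows "upper_box_dim (graph01 (\<lambda>x. f x * g x))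
    \<le> max (upper_box_dim (graph01 f)) (upper_box_dim (graph01 g))"
proof -
  have "\<exists>a\<in>{0..1}. \<forall>y\<in>{0..1}. \<bar>f y\<bar> \<le> \<bar>f a\<bar>" "\<exists>b\<in>{0..1}. \<forall>y\<in>{0..1}. \<bar>g y\<bar> \<le> \<bar>g b\<bar>"
    using f g by (auto intro!: continuous_attains_sup continuous_intros)
  then obtain a b where a: "\<And>y. y \<in> {0..1} \<Longrightarrow> \<bar>f y\<bar> \<le> \<bar>f a\<bar>"
    and b: "\<And>y. y \<in> {0..1} \<Longrightarrow> \<bar>g y\<bar> \<le> \<bar>g b\<bar>" by blast
  have "\<bar>f x * g x - f y * g y\<bar> \<le> \<bar>g b\<bar> * \<bar>f x - f y\<bar> + \<bar>f a\<bar> * \<bar>g x - g y\<bar>"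
    if "x \<in> {0..1}" "y \<in> {0..1}" for x y
  proof -
    have "f x * g x - f y * g y = (f x - f y) * g x + f y * (g x - g y)" by algebra
    then have "\<bar>f x * g x - f y * g y\<bar> \<le> \<bar>g x\<bar> * \<bar>f x - f y\<bar> + \<bar>f y\<bar> * \<bar>g x - g y\<bar>"
      by (simp add: abs_mult[symmetric] mult.commute abs_triangle_ineq)
    also have "\<dots> \<le> \<bar>g b\<bar> * \<bar>f x - f y\<bar> + \<bar>f a\<bar> * \<bar>g x - g y\<bar>"
      using a b that by (intro add_mono mult_right_mono) auto
    finally show ?thesis .
  qed
  moreover have "continuous_on {0..1} (\<lambda>x. f x * g x)" using f g by (intro continuous_intros)
  ultimately show ?thesis
    by (intro upper_box_dim_graph01_le_of_dominated[OF f g _ abs_ge_zero abs_ge_zero])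
qed

lemma upper_box_dim_graph01_inverse_le:
  assumes g: "continuous_on {0..1} g" and nonzero: "\<forall>x\<in>{0..1}. g x \<noteq> 0"
  shows "upper_box_dim (graph01 (\<lambda>x. inverse (g x))) \<le> upper_box_dim (graph01 g)"
proof -
  have "\<exists>a\<in>{0..1}. \<forall>y\<in>{0..1}. \<bar>g a\<bar> \<le> \<bar>g y\<bar>"
    using g by (auto intro!: continuous_attains_inf continuous_intros)
  then obtain a where a: "a \<in> {0..1}" "\<And>y. y \<in> {0..1} \<Longrightarrow> \<bar>g a\<bar> \<le> \<bar>g y\<bar>" by blast
  define m where "m = \<bar>g a\<bar>"
  have m: "m > 0" using a nonzero unfolding m_def by auto
  have "\<bar>inverse (g x) - inverse (g y)\<bar> \<le> inverse (m * m) * \<bar>g x - g y\<bar> + 0 * \<bar>g x - g y\<bar>"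
    if "x \<in> {0..1}" "y \<in> {0..1}" for x y
  proof -
    have "m * m \<le> \<bar>g x\<bar> * \<bar>g y\<bar>"
      using a(2) that m unfolding m_def by (intro mult_mono) auto
    moreover have "0 < m * m" using m by simp
    ultimately have "\<bar>g x - g y\<bar> / (\<bar>g x\<bar> * \<bar>g y\<bar>) \<le> \<bar>g x - g y\<bar> / (m * m)"
      by (intro divide_left_mono) auto
    moreover have "\<bar>inverse (g x) - inverse (g y)\<bar> = \<bar>g x - g y\<bar> / (\<bar>g x\<bar> * \<bar>g y\<bar>)"
      using nonzero that by (simp add: inverse_diff_inverse abs_mult divide_inverse mult.commute abs_minus_commute)
    ultimately show ?thesis by (simp add: divide_inverse mult.commute)
  qed
  moreover have "continuous_on {0..1} (\<lambda>x. inverse (g x))"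
    using g nonzero by (intro continuous_intros) auto
  ultimately show ?thesis
    using upper_box_dim_graph01_le_of_dominated[OF g g, of "\<lambda>x. inverse (g x)" "inverse (m * m)" 0] m
    by auto
qed

lemma upper_box_dim_graph01_le_max_mult:
  assumes f: "continuous_on {0..1} f" and g: "continuous_on {0..1} g" and nonzero: "\<forall>x\<in>{0..1}. g x \<noteq> 0"
  shows "upper_box_dim (graph01 f)
    \<le> max (upper_box_dim (graph01 (\<lambda>x. f x * g x))) (upper_box_dim (graph01 g))"
proof -
  have "graph01 f = graph01 (\<lambda>x. (f x * g x) * inverse (g x))"
    using nonzero by (intro graph01_cong) simp
  then have "upper_box_dim (graph01 f) = upper_box_dim (graph01 (\<lambda>x. (f x * g x) * inverse (g x)))"
    by simp
  also have "\<dots> \<le> max (upper_box_dim (graph01 (\<lambda>x. f x * g x))) (upper_box_dim (graph01 (\<lambda>x. inverse (g x))))"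
    using assms by (intro upper_box_dim_graph01_mult_le continuous_intros) auto
  also have "\<dots> \<le> max (upper_box_dim (graph01 (\<lambda>x. f x * g x))) (upper_box_dim (graph01 g))"
    using upper_box_dim_graph01_inverse_le[OF g nonzero] by (rule max.mono[OF order_refl])
  finally show ?thesis .
qed

theorem proposition3p5:
  fixes f g :: "real \<Rightarrow> real"
  assumes "continuous_on {0..1} f" and "continuous_on {0..1} g"
    and "\<forall>x\<in>{0..1}. f x \<noteq> 0" and "\<forall>x\<in>{0..1}. g x \<noteq> 0"
    and "upper_box_dim (graph01 f) \<noteq> upper_box_dim (graph01 g)"
  shows "upper_box_dim (graph01 (\<lambda>x. f x * g x))
           = max (upper_box_dim (graph01 f)) (upper_box_dim (graph01 g))"
proof -
  let ?dim = "\<lambda>h. upper_box_dim (graph01 h)"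
  have "?dim f \<le> max (?dim (\<lambda>x. f x * g x)) (?dim g)" "?dim g \<le> max (?dim (\<lambda>x. g x * f x)) (?dim f)"
    using assms(1-4) by (auto intro: upper_box_dim_graph01_le_max_mult)
  moreover have "?dim (\<lambda>x. f x * g x) \<le> max (?dim f) (?dim g)"
    by (rule upper_box_dim_graph01_mult_le[OF assms(1,2)])
  ultimately show ?thesis
    using assms(5) by (cases "?dim f" "?dim g" rule: linorder_cases) (auto simp: max_def mult.commute split: if_splits)
qed

end
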